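(* Let $m,n\ge2$ be integers and let $H$ be the graph on the vertex set $\{x_{i,j}: i\in[m], j\in[n]\}$ with edge set $\{\{x_{i,j},x_{i',j+1}\}: 1\le i<i'\le m,\ 1\le j\le n-1\}$. Then $H$ is a chordal bipartite graph.
   Context: A bipartite graph is chordal bipartite if every cycle of length at least six has a chord. *)

theory Defs
  imports Main
begin

definition simple_graph :: "'a set \<Rightarrow> ('a \<Rightarrow> 'a \<Rightarrow> bool) \<Rightarrow> bool" where
  "simple_graph V E \<longleftrightarrow>
     (\<forall>u v. E u v \<longrightarrow> u \<in> V \<and> v \<in> V \<and> u \<noteq> v \<and> E v u)"

definition bipartite :: "'a set \<Rightarrow> ('a \<Rightarrow> 'a \<Rightarrow> bool) \<Rightarrow> bool" where
  "bipartite V E \<longleftrightarrow>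
     (\<exists>A B. A \<union> B = V \<and> A \<inter> B = {} \<and>
        (\<forall>u v. E u v \<longrightarrow> (u \<in> A \<and> v \<in> B) \<or> (u \<in> B \<and> v \<in> A)))"

definition is_cycle :: "'a set \<Rightarrow> ('a \<Rightarrow> 'a \<Rightarrow> bool) \<Rightarrow> 'a list \<Rightarrow> bool" where
  "is_cycle V E vs \<longleftrightarrow>
     length vs \<ge> 3 \<and> distinct vs \<and> set vs \<subseteq> V \<and>
     (\<forall>i < length vs. E (vs ! i) (vs ! ((i + 1) mod length vs)))"

definition has_chord :: "('a \<Rightarrow> 'a \<Rightarrow> bool) \<Rightarrow> 'a list \<Rightarrow> bool" where
  "has_chord E vs \<longleftrightarrow>
     (\<exists>i < length vs. \<exists>j < length vs. i \<noteq> j \<and>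
        j \<noteq> (i + 1) mod length vs \<and> i \<noteq> (j + 1) mod length vs \<and>
        E (vs ! i) (vs ! j))"

definition chordal_bipartite :: "'a set \<Rightarrow> ('a \<Rightarrow> 'a \<Rightarrow> bool) \<Rightarrow> bool" where
  "chordal_bipartite V E \<longleftrightarrow> simple_graph V E \<and> bipartite V E \<and>
     (\<forall>vs. is_cycle V E vs \<and> length vs \<ge> 6 \<longrightarrow> has_chord E vs)"

definition H_verts :: "nat \<Rightarrow> nat \<Rightarrow> (nat \<times> nat) set" where
  "H_verts m n = {(i, j). 1 \<le> i \<and> i \<le> m \<and> 1 \<le> j \<and> j \<le> n}"

definition H_edge :: "nat \<Rightarrow> nat \<Rightarrow> (nat \<times> nat) \<Rightarrow> (nat \<times> nat) \<Rightarrow> bool" where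
  "H_edge m n u v \<longleftrightarrow>
     (\<exists>i i' j. 1 \<le> i \<and> i < i' \<and> i' \<le> m \<and> 1 \<le> j \<and> j \<le> n - 1 \<and>
        ((u = (i, j) \<and> v = (i', j + 1)) \<or> (v = (i, j) \<and> u = (i', j + 1))))"

end

theory Submission
  imports Defs
begin

text \<open>Edges of H join consecutive columns and rise strictly in row, so H is bipartite by
  column parity. Given a cycle of length at least five, let q be a vertex of it in the
  rightmost column it meets, in the lowest row there. Both cycle neighbours p1, p3 of q lie
  in the previous column, below q. The other cycle neighbour p0 of p1 either returns to the
  column of q, not below q and hence above p3, or drops one more column, below p1; likewise
  for the other cycle neighbour p4 of p3. In every case p0 p3 or p1 p4 is an edge, which is a chord.\<close>

lemma mod_add_left_cancel_less:
  fixes a b r k :: nat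
  assumes "a < k" "b < k"
  shows "(r + a) mod k = (r + b) mod k \<longleftrightarrow> a = b"
proof
  assume "(r + a) mod k = (r + b) mod k"
  then have "a mod k = b mod k" by (simp add: nat_mod_eq_iff)
  then show "a = b" using assms by simp
qed simp

lemma is_cycle_rotate:
  assumes "is_cycle V E vs"
  shows "is_cycle V E (rotate r vs)"
proof -
  define k where "k = length vs"
  have "E (rotate r vs ! i) (rotate r vs ! ((i + 1) mod k))" if "i < k" for i
  proof -
    have k_pos: "0 < k"
      using that by simp
    have "rotate r vs ! ((i + 1) mod k) = vs ! ((r + (i + 1) mod k) mod k)"
      using k_pos unfolding k_def by (intro nth_rotate mod_less_divisor)
    also have "\<dots> = vs ! (((r + i) mod k + 1) mod k)"
      by (simp only: mod_add_left_eq mod_add_right_eq add.assoc)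
    finally show ?thesis
      using assms that k_pos unfolding is_cycle_def k_def by (simp add: nth_rotate)
  qed
  then show ?thesis
    using assms unfolding is_cycle_def k_def by simp
qed

lemma has_chord_rotate:
  assumes "has_chord E (rotate r vs)"
  shows "has_chord E vs"
proof -
  define k where "k = length vs"
  let ?shift = "\<lambda>i. (r + i) mod k"
  obtain i j where ij: "i < k" "j < k" "i \<noteq> j" "j \<noteq> (i + 1) mod k" "i \<noteq> (j + 1) mod k"
    and E: "E (rotate r vs ! i) (rotate r vs ! j)"
    using assms unfolding has_chord_def k_def by auto
  have shift_succ: "(?shift x + 1) mod k = ?shift ((x + 1) mod k)" for x
    by presburger
  have "?shift i \<noteq> ?shift j" "?shift j \<noteq> (?shift i + 1) mod k" "?shift i \<noteq> (?shift j + 1) mod k"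
    using ij by (simp_all only: shift_succ mod_add_left_cancel_less mod_less_divisor) auto
  moreover have "E (vs ! ?shift i) (vs ! ?shift j)"
    using E ij unfolding k_def by (simp add: nth_rotate)
  moreover have "?shift i < k" "?shift j < k"
    using ij by simp_all
  ultimately show ?thesis
    unfolding has_chord_def k_def by blast
qed

lemma ex_rotate_nth_eq:
  assumes "v \<in> set vs" and "j < length vs"
  shows "\<exists>r. rotate r vs ! j = v"
proof -
  define k where "k = length vs"
  obtain i where i: "i < k" "vs ! i = v"
    using assms(1) unfolding k_def by (auto simp: in_set_conv_nth)
  have "i + k - j + j = i + k"
    using assms(2) unfolding k_def[symmetric] by simp
  then have "(i + k - j + j) mod k = i"
    using i(1) by simp
  then have "rotate (i + k - j) vs ! j = v"
    using i assms(2) unfolding k_def by (simp add: nth_rotate)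
  then show ?thesis ..
qed

lemma has_chord_nth:
  assumes "i + 1 < j" "j < length vs" "0 < i \<or> j + 1 < length vs" "E (vs ! i) (vs ! j)"
  shows "has_chord E vs"
proof -
  have "(i + 1) mod length vs = i + 1"
    using assms(1,2) by simp
  moreover have "i \<noteq> (j + 1) mod length vs"
    using assms(1-3) by (cases "j + 1 = length vs") simp_all
  ultimately show ?thesis
    unfolding has_chord_def using assms by (intro exI[of _ i] exI[of _ j]) auto
qed

text \<open>H with an arbitrary vertex set and rows from an arbitrary linear order: a vertex is a
  pair (row, column).\<close>

definition staircase_edge :: "('a::linorder \<times> nat) set \<Rightarrow> 'a \<times> nat \<Rightarrow> 'a \<times> nat \<Rightarrow> bool" where
  "staircase_edge V u v \<longleftrightarrow> u \<in> V \<and> v \<in> V \<and>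
     ((snd v = snd u + 1 \<and> fst u < fst v) \<or> (snd u = snd v + 1 \<and> fst v < fst u))"

lemma H_edge_eq_staircase_edge: "H_edge m n = staircase_edge (H_verts m n)"
proof (intro ext)
  fix u v :: "nat \<times> nat"
  obtain a b c d where uv: "u = (a, b)" "v = (c, d)" by fastforce
  show "H_edge m n u v = staircase_edge (H_verts m n) u v"
    unfolding uv H_edge_def staircase_edge_def H_verts_def by auto
qed

lemma simple_graph_staircase: "simple_graph V (staircase_edge V)"
  unfolding simple_graph_def staircase_edge_def by auto

lemma bipartite_staircase: "bipartite V (staircase_edge V)"
  unfolding bipartite_def
proof (intro exI conjI)
  show "{p \<in> V. even (snd p)} \<union> {p \<in> V. odd (snd p)} = V"
    and "{p \<in> V. even (snd p)} \<inter> {p \<in> V. odd (snd p)} = {}"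
    by auto
  show "\<forall>u v. staircase_edge V u v \<longrightarrow>
      u \<in> {p \<in> V. even (snd p)} \<and> v \<in> {p \<in> V. odd (snd p)} \<or>
      u \<in> {p \<in> V. odd (snd p)} \<and> v \<in> {p \<in> V. even (snd p)}"
    unfolding staircase_edge_def by auto
qed

lemma finite_ex_max_snd_min_fst:
  fixes S :: "('a::linorder \<times> nat) set"
  assumes "finite S" and "S \<noteq> {}"
  shows "\<exists>q\<in>S. \<forall>p\<in>S. snd p \<le> snd q \<and> (snd p = snd q \<longrightarrow> fst q \<le> fst p)"
proof -
  define J where "J = Max (snd ` S)"
  define C where "C = {p \<in> S. snd p = J}"
  have "J \<in> snd ` S" unfolding J_def using assms by simp
  then have "C \<noteq> {}" unfolding C_def by auto
  moreover have "finite C" unfolding C_def using assms(1) by simp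
  ultimately obtain q where "q \<in> C" "fst q = Min (fst ` C)"
    by (metis (mono_tags, lifting) Min_in finite_imageI image_iff image_is_empty)
  moreover have "snd p \<le> J" if "p \<in> S" for p
    unfolding J_def using assms(1) that by simp
  moreover have "fst q \<le> fst p" if "p \<in> C" for p
    using \<open>finite C\<close> \<open>fst q = Min (fst ` C)\<close> that by simp
  ultimately show ?thesis
    unfolding C_def by (intro bexI[of _ q]) auto
qed

lemma staircase_cycle_has_chord:
  assumes cycle: "is_cycle V (staircase_edge V) vs" and len: "5 \<le> length vs"
    and extremal: "\<forall>p\<in>set vs. snd p \<le> snd (vs ! 2) \<and> (snd p = snd (vs ! 2) \<longrightarrow> fst (vs ! 2) \<le> fst p)"
  shows "has_chord (staircase_edge V) vs"
proof -
  let ?E = "staircase_edge V"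
  define p0 p1 q p3 p4 where nth_defs: "p0 = vs ! 0" "p1 = vs ! 1" "q = vs ! 2" "p3 = vs ! 3" "p4 = vs ! 4"
  have step: "?E (vs ! i) (vs ! (i + 1))" if "i < 4" for i
  proof -
    have "i < length vs" "(i + 1) mod length vs = i + 1"
      using that len by simp_all
    then show ?thesis
      using cycle unfolding is_cycle_def by metis
  qed
  have path: "?E p0 p1" "?E p1 q" "?E q p3" "?E p3 p4"
    using step[of 0] step[of 1] step[of 2] step[of 3] unfolding nth_defs by (simp_all add: numeral_eq_Suc)
  have on_cycle: "p0 \<in> set vs" "p1 \<in> set vs" "p3 \<in> set vs" "p4 \<in> set vs"
    using len unfolding nth_defs by (auto intro!: nth_mem)
  have below_q: "snd p \<le> snd q" "snd p = snd q \<Longrightarrow> fst q \<le> fst p" if "p \<in> set vs" for p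
    using extremal that unfolding nth_defs by auto
  have p1: "snd p1 + 1 = snd q" "fst p1 < fst q"
    using path(2) below_q[OF on_cycle(2)] unfolding staircase_edge_def by auto
  have p3: "snd p3 + 1 = snd q" "fst p3 < fst q"
    using path(3) below_q[OF on_cycle(3)] unfolding staircase_edge_def by auto
  have p0: "snd p0 = snd q \<and> fst q \<le> fst p0 \<or> snd p0 + 1 = snd p1 \<and> fst p0 < fst p1"
    using path(1) below_q[OF on_cycle(1)] p1 unfolding staircase_edge_def by auto
  have p4: "snd p4 = snd q \<and> fst q \<le> fst p4 \<or> snd p4 + 1 = snd p3 \<and> fst p4 < fst p3"
    using path(4) below_q[OF on_cycle(4)] p3 unfolding staircase_edge_def by auto
  have in_V: "p0 \<in> V" "p1 \<in> V" "p3 \<in> V" "p4 \<in> V"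
    using path unfolding staircase_edge_def by simp_all
  have "?E p0 p3 \<or> ?E p1 p4"
  proof (cases "snd p0 = snd q \<or> snd p4 = snd q")
    case True
    then show ?thesis
      using p0 p1 p3 p4 in_V unfolding staircase_edge_def by auto
  next
    case False
    \<comment> \<open>p0 lies below p1 and p4 below p3: the lower of p1, p3 sees p0 or p4\<close>
    then show ?thesis
      using p0 p1 p3 p4 in_V unfolding staircase_edge_def by (cases "fst p1 \<le> fst p3") auto
  qed
  then show ?thesis
    using len has_chord_nth[of 0 3 vs] has_chord_nth[of 1 4 vs] unfolding nth_defs by auto
qed

lemma chordal_bipartite_staircase: "chordal_bipartite V (staircase_edge V)"
  unfolding chordal_bipartite_def
proof (intro conjI allI impI simple_graph_staircase bipartite_staircase)
  fix vs
  assume "is_cycle V (staircase_edge V) vs \<and> 6 \<le> length vs"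
  then have cycle: "is_cycle V (staircase_edge V) vs" and len: "6 \<le> length vs"
    by simp_all
  have "set vs \<noteq> {}"
    using len by auto
  then obtain q where "q \<in> set vs"
    and extremal: "\<forall>p\<in>set vs. snd p \<le> snd q \<and> (snd p = snd q \<longrightarrow> fst q \<le> fst p)"
    using finite_ex_max_snd_min_fst[of "set vs"] by blast
  then obtain r where "rotate r vs ! 2 = q"
    using ex_rotate_nth_eq[of q vs 2] len by auto
  then have "has_chord (staircase_edge V) (rotate r vs)"
    using staircase_cycle_has_chord[OF is_cycle_rotate[OF cycle]] extremal len by simp
  then show "has_chord (staircase_edge V) vs"
    by (rule has_chord_rotate)
qed

theorem lemma3p4:
  fixes m n :: nat
  assumes "m \<ge> 2" and "n \<ge> 2"
  shows "chordal_bipartite (H_verts m n) (H_edge m n)"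
  unfolding H_edge_eq_staircase_edge by (rule chordal_bipartite_staircase)

end
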